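(* Consider the following over-the-air federated learning setting. There are $N$ devices indexed by $\mathcal{N}=\{1,\dots,N\}$, each device $n$ having a local objective $L_n:\mathbb{R}^d\to\mathbb{R}$, and the global objective is $L(\boldsymbol m)=\frac1N\sum_{n=1}^N L_n(\boldsymbol m)$. Let $\boldsymbol m^*$ be a global minimizer of $L$ and $\boldsymbol m_n^*=[m^*_{n,1},\dots,m^*_{n,d}]$ a minimizer of $L_n$; write $\boldsymbol m^*=[m_1^*,\dots,m_d^*]$ and $$\Gamma=\max_n\Big\{\frac{\theta d}{2}\big(\max_i |m_i^*-m_{n,i}^*|\big)^2\Big\}.$$ In round $t$ the server holds $\boldsymbol m^t$; a nonempty uploader set $\mathcal K^t\subseteq\mathcal N$ and a jammer set $\mathcal J^t\subseteq\mathcal N\setminus\mathcal K^t$ are chosen. Each uploader sets $\boldsymbol m_n^t=\boldsymbol m^t$ and computes a stochastic (mini-batch) gradient $\boldsymbol g_n^t$ of $L_n$ at $\boldsymbol m_n^t$. Let $p_{n,B}^t=h_{n,B}^t\sqrt{P_n}>0$, where $h_{n,B}^t>0$ is the channel gain from device $n$ to the server and $P_n>0$ its power budget. The server update is $$\boldsymbol m^{t+1}=\boldsymbol m^t-\tau^t\Big(\hat{\boldsymbol g}^t+\frac{G}{\sum_{n\in\mathcal K^t}p_{n,B}^t}\boldsymbol r_{B,Tot}^t\Big),\qquad \hat{\boldsymbol g}^t=\sum_{n\in\mathcal K^t}\frac{p_{n,B}^t}{\sum_{k\in\mathcal K^t}p_{k,B}^t}\boldsymbol g_n^t,$$ where $\boldsymbol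 r_{B,Tot}^t=\sum_{n\in\mathcal J^t}\frac{p_{n,B}^t}{\sqrt d}\boldsymbol e_n^t+\boldsymbol r_B^t$, with $\boldsymbol e_n^t\sim\mathcal N(0,\mathbf I_d)$ and $\boldsymbol r_B^t\sim\mathcal N(0,\sigma_B\mathbf I_d)$ mutually independent and independent of the gradients. Assume: (A1) $\mathbb E[\boldsymbol g_n^t]=\nabla L_n(\boldsymbol m_n^t)$, $\mathbb E\|\boldsymbol g_n^t-\nabla L_n(\boldsymbol m_n^t)\|_2^2\le\vartheta^2$, $\mathbb E\|\boldsymbol g_n^t\|_2\le G$; (A2) each $L_n$ is $\theta$-smooth: $L_n(\boldsymbol\iota')-L_n(\boldsymbol\iota)\le(\boldsymbol\iota'-\boldsymbol\iota)^{\mathrm T}\nabla L_n(\boldsymbol\iota)+\frac\theta2\|\boldsymbol\iota'-\boldsymbol\iota\|_2^2$ for all $\boldsymbol\iota,\boldsymbol\iota'$; (A3) each $L_n$ is $\rho$-strongly convex: $L_n(\boldsymbol\iota')-L_n(\boldsymbol\iota)\ge(\boldsymbol\iota'-\boldsymbol\iota)^{\mathrm T}\nabla L_n(\boldsymbol\iota)+\frac\rho2\|\boldsymbol\iota'-\boldsymbol\iota\|_2^2$ for all $\boldsymbol\iota,\boldsymbol\iota'$. Let $\varrho$ be a constant with $\frac1\varrho\le\tau^t\le\frac1\theta$. Then $$\mathbb E\big[\|\boldsymbol m^{t+1}-\boldsymbol m^*\|_2^2\big]\le(1-\rho\tau^t)\,\mathbb E\big[\|\boldsymbol m^t-\boldsymbol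 m^*\|_2^2\big]+(\tau^t)^2\big(2\varrho\Gamma+\vartheta^2+G^2\Psi^t\big),$$ where $$\Psi^t=\frac{N\sum_{n\in\mathcal J^t}(p_{n,B}^t)^2+d\sigma_B}{\big(\sum_{n\in\mathcal K^t}p_{n,B}^t\big)^2}.$$ The expectation is with respect to the stochastic gradients and the Gaussian noise.
   Context: $G>0$ is a constant which, as a standing assumption of the paper, upper bounds $\|\boldsymbol g_n^t\|_2$. $\sigma_B$ denotes the variance (per coordinate) of the receiver noise at the server. The jamming vectors $\boldsymbol e_n^t$ are artificial Gaussian noise sent by jammer devices; uploaders transmit $\frac{\sqrt{P_n}}{G}\boldsymbol g_n^t$ and the server post-processes the superimposed received signal by multiplying by $G/\sum_{n\in\mathcal K^t}p^t_{n,B}$, which yields the stated update. *)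

theory Defs
  imports "HOL-Probability.Probability"
begin

definition Gamma_het :: "nat \<Rightarrow> real \<Rightarrow> real^'d \<Rightarrow> (nat \<Rightarrow> real^'d) \<Rightarrow> real" where
  "Gamma_het N \<theta> mstar mloc =
     Max ((\<lambda>n. \<theta> * real CARD('d) / 2 *
              (Max ((\<lambda>i. \<bar>mstar $ i - mloc n $ i\<bar>) ` (UNIV :: 'd set)))\<^sup>2) ` {1..N})"

definition Psi :: "nat \<Rightarrow> nat \<Rightarrow> real \<Rightarrow> nat set \<Rightarrow> nat set \<Rightarrow> (nat \<Rightarrow> real) \<Rightarrow> real" where
  "Psi N d \<sigma>B J K p = (real N * (\<Sum>n\<in>J. (p n)\<^sup>2) + real d * \<sigma>B) / (\<Sum>n\<in>K. p n)\<^sup>2"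

text \<open>Scalar noise family: (Some n, i) is coordinate i of the jamming vector e_n,
  (None, i) is coordinate i of the receiver noise r_B.\<close>
definition noise_fam :: "(nat \<Rightarrow> 'a \<Rightarrow> real^'d) \<Rightarrow> ('a \<Rightarrow> real^'d) \<Rightarrow> nat option \<times> 'd \<Rightarrow> 'a \<Rightarrow> real" where
  "noise_fam e r k \<omega> = (case fst k of Some n \<Rightarrow> e n \<omega> $ snd k | None \<Rightarrow> r \<omega> $ snd k)"

end

theory Submission
  imports Defs
begin

(* Write the new model as m' - m* = X - c R, where X = m - m* - tau ghat is a measurable function
   of the data (m, g) and R is the total jamming and receiver noise. R is independent of the data
   and has centred coordinates, so E|m' - m*|^2 = E|X|^2 + c^2 E|R|^2, and E|R|^2 is computed
   coordinatewise from the independence of the Gaussian components.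
   Conditioning on m splits X further into the step A = m - m* - tau E[ghat | m], which by
   unbiasedness is a deterministic aggregated gradient step, and the gradient noise
   D = ghat - E[ghat | m]; the two are orthogonal in L2. By smoothness and strong convexity the
   step contracts |m - m*|^2 by the factor 1 - rho tau up to the heterogeneity term 2 tau Gamma,
   and E|D|^2 <= vartheta^2 by Jensen. *)

section \<open>Vectors in real^'d\<close>

lemma borel_measurable_vec_nth [measurable (raw)]:
  "f \<in> borel_measurable M \<Longrightarrow> (\<lambda>\<omega>. (f \<omega> :: real^'d) $ i) \<in> borel_measurable M"
  using measurable_compose[OF _ borel_measurable_nth] .

lemma borel_measurable_vec_iff:
  fixes f :: "'a \<Rightarrow> real^'d"
  shows "f \<in> borel_measurable M \<longleftrightarrow> (\<forall>i. (\<lambda>\<omega>. f \<omega> $ i) \<in> borel_measurable M)"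
  unfolding borel_measurable_euclidean_space[where 'c="real^'d"]
  by (auto simp: Basis_vec_def inner_axis)

lemma norm_sq_vec_eq_sum: "(norm (v :: real^'d))\<^sup>2 = (\<Sum>i\<in>UNIV. (v $ i)\<^sup>2)"
  unfolding power2_norm_eq_inner inner_vec_def by (simp add: power2_eq_square)

lemma vec_nth_sq_le_norm_sq: "(v $ i)\<^sup>2 \<le> (norm (v :: real^'d))\<^sup>2"
  by (metis abs_ge_zero component_le_norm_cart power2_abs power_mono)

lemma norm_sq_le_CARD_mult_Max_abs:
  "(norm (v :: real^'d))\<^sup>2 \<le> real CARD('d) * (Max ((\<lambda>i. \<bar>v $ i\<bar>) ` UNIV))\<^sup>2"
proof -
  have "(v $ i)\<^sup>2 \<le> (Max ((\<lambda>i. \<bar>v $ i\<bar>) ` UNIV))\<^sup>2" for i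
    by (metis (mono_tags) Max_ge abs_ge_zero finite finite_imageI power2_abs power_mono rangeI)
  then have "(\<Sum>i\<in>UNIV. (v $ i)\<^sup>2) \<le> (\<Sum>i\<in>(UNIV::'d set). (Max ((\<lambda>i. \<bar>v $ i\<bar>) ` UNIV))\<^sup>2)"
    by (intro sum_mono)
  then show ?thesis by (simp add: norm_sq_vec_eq_sum)
qed

lemma norm_diff_scaleR_sq:
  fixes a b :: "'v::real_inner"
  shows "(norm (a - c *\<^sub>R b))\<^sup>2 = (norm a)\<^sup>2 - 2 * c * (a \<bullet> b) + c\<^sup>2 * (norm b)\<^sup>2"
  unfolding power2_norm_eq_inner
  by (simp add: inner_diff_left inner_diff_right inner_commute algebra_simps power2_eq_square)

lemma norm_sum_scaleR_le:
  fixes v :: "'i \<Rightarrow> 'a::real_normed_vector"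
  assumes "\<And>n. n \<in> K \<Longrightarrow> w n \<ge> 0" "(\<Sum>n\<in>K. w n) = 1" "\<And>n. n \<in> K \<Longrightarrow> norm (v n) \<le> G"
  shows "norm (\<Sum>n\<in>K. w n *\<^sub>R v n) \<le> G"
proof -
  have "norm (\<Sum>n\<in>K. w n *\<^sub>R v n) \<le> (\<Sum>n\<in>K. w n * norm (v n))"
    by (rule order_trans[OF norm_sum]) (simp add: assms(1) sum_mono)
  also have "\<dots> \<le> (\<Sum>n\<in>K. w n * G)"
    using assms(1,3) by (intro sum_mono mult_left_mono) auto
  finally show ?thesis by (simp add: assms(2) flip: sum_distrib_right)
qed

lemma norm_sum_scaleR_sq_le:
  fixes v :: "'i \<Rightarrow> 'a::real_normed_vector"
  assumes "finite K" "\<And>n. n \<in> K \<Longrightarrow> w n \<ge> 0" "(\<Sum>n\<in>K. w n) = 1"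
  shows "(norm (\<Sum>n\<in>K. w n *\<^sub>R v n))\<^sup>2 \<le> (\<Sum>n\<in>K. w n * (norm (v n))\<^sup>2)"
proof -
  have "K \<noteq> {}" using assms(3) by auto
  have "norm (\<Sum>n\<in>K. w n *\<^sub>R v n) \<le> (\<Sum>n\<in>K. w n * norm (v n))"
    by (rule order_trans[OF norm_sum]) (simp add: assms(2) sum_mono)
  then have "(norm (\<Sum>n\<in>K. w n *\<^sub>R v n))\<^sup>2 \<le> (\<Sum>n\<in>K. w n *\<^sub>R norm (v n))\<^sup>2"
    by (simp add: power_mono)
  also have "\<dots> \<le> (\<Sum>n\<in>K. w n * (norm (v n))\<^sup>2)"
    using convex_on_sum[OF assms(1) \<open>K \<noteq> {}\<close> convex_power2 assms(3,2)] by simp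
  finally show ?thesis .
qed

section \<open>Smooth and strongly convex objectives\<close>

lemma smooth_gradient_norm_sq_le:
  fixes f :: "'v::real_inner \<Rightarrow> real"
  assumes "\<theta> > 0"
    and smooth: "\<And>x y. f y - f x \<le> (y - x) \<bullet> grad x + \<theta> / 2 * (norm (y - x))\<^sup>2"
    and min: "\<And>x. f xmin \<le> f x"
  shows "(norm (grad y))\<^sup>2 \<le> 2 * \<theta> * (f y - f xmin)"
proof -
  define z where "z = y - (1 / \<theta>) *\<^sub>R grad y"
  have "f xmin - f y \<le> f z - f y" using min by simp
  also have "\<dots> \<le> (z - y) \<bullet> grad y + \<theta> / 2 * (norm (z - y))\<^sup>2" by (rule smooth)
  also have "(z - y) \<bullet> grad y = - (1 / \<theta>) * (norm (grad y))\<^sup>2"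
    by (simp add: z_def power2_norm_eq_inner)
  also have "(norm (z - y))\<^sup>2 = (1 / \<theta>)\<^sup>2 * (norm (grad y))\<^sup>2"
    using \<open>\<theta> > 0\<close> by (simp add: z_def power_divide)
  also have "- (1 / \<theta>) * (norm (grad y))\<^sup>2 + \<theta> / 2 * ((1 / \<theta>)\<^sup>2 * (norm (grad y))\<^sup>2)
      = - (norm (grad y))\<^sup>2 / (2 * \<theta>)"
    using \<open>\<theta> > 0\<close> by (simp add: field_simps power2_eq_square)
  finally show ?thesis using \<open>\<theta> > 0\<close> by (simp add: field_simps)
qed

lemma smooth_gradient_eq_0_at_minimizer:
  fixes f :: "'v::real_inner \<Rightarrow> real"
  assumes "\<theta> > 0"
    and "\<And>x y. f y - f x \<le> (y - x) \<bullet> grad x + \<theta> / 2 * (norm (y - x))\<^sup>2"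
    and "\<And>x. f xmin \<le> f x"
  shows "grad xmin = 0"
  using smooth_gradient_norm_sq_le[OF assms, of xmin] by simp

lemma smooth_optimality_gap_le_CARD_mult_Max_abs:
  fixes f :: "real^'d \<Rightarrow> real"
  assumes "\<theta> > 0"
    and smooth: "\<And>x y. f y - f x \<le> (y - x) \<bullet> grad x + \<theta> / 2 * (norm (y - x))\<^sup>2"
    and min: "\<And>x. f xmin \<le> f x"
  shows "f y - f xmin \<le> \<theta> * real CARD('d) / 2 * (Max ((\<lambda>i. \<bar>y $ i - xmin $ i\<bar>) ` UNIV))\<^sup>2"
proof -
  have "f y - f xmin \<le> (y - xmin) \<bullet> grad xmin + \<theta> / 2 * (norm (y - xmin))\<^sup>2"
    by (rule smooth)
  also have "\<dots> = \<theta> / 2 * (norm (y - xmin))\<^sup>2"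
    using smooth_gradient_eq_0_at_minimizer[OF \<open>\<theta> > 0\<close> smooth min] by simp
  also have "\<dots> \<le> \<theta> * real CARD('d) / 2 * (Max ((\<lambda>i. \<bar>y $ i - xmin $ i\<bar>) ` UNIV))\<^sup>2"
    using \<open>\<theta> > 0\<close> norm_sq_le_CARD_mult_Max_abs[of "y - xmin"] by simp
  finally show ?thesis .
qed

lemma Gamma_het_ge:
  fixes mstar :: "real^'d"
  assumes "n \<in> {1..N}"
  shows "\<theta> * real CARD('d) / 2 * (Max ((\<lambda>i. \<bar>mstar $ i - mloc n $ i\<bar>) ` UNIV))\<^sup>2
         \<le> Gamma_het N \<theta> mstar mloc"
  unfolding Gamma_het_def using assms by (intro Max_ge) auto

lemma Gamma_het_nonneg:
  fixes mstar :: "real^'d"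
  assumes "N \<ge> 1" "\<theta> \<ge> 0"
  shows "0 \<le> Gamma_het N \<theta> mstar mloc"
proof -
  have "0 \<le> \<theta> * real CARD('d) / 2 * (Max ((\<lambda>i. \<bar>mstar $ i - mloc 1 $ i\<bar>) ` UNIV))\<^sup>2"
    using assms by simp
  also have "\<dots> \<le> Gamma_het N \<theta> mstar mloc"
    by (rule Gamma_het_ge) (use assms in auto)
  finally show ?thesis .
qed

lemma norm_weighted_gradient_sq_le:
  fixes f :: "'i \<Rightarrow> 'v::real_inner \<Rightarrow> real"
  assumes "finite K" and w_nonneg: "\<And>n. n \<in> K \<Longrightarrow> w n \<ge> 0" and w_sum: "(\<Sum>n\<in>K. w n) = 1"
    and smooth: "\<And>n x y. n \<in> K \<Longrightarrow> f n y - f n x \<le> (y - x) \<bullet> grad n x + \<theta> / 2 * (norm (y - x))\<^sup>2"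
    and min: "\<And>n x. n \<in> K \<Longrightarrow> f n (xmin n) \<le> f n x"
    and "\<theta> > 0"
  shows "(norm (\<Sum>n\<in>K. w n *\<^sub>R grad n x))\<^sup>2 \<le> 2 * \<theta> * (\<Sum>n\<in>K. w n * (f n x - f n (xmin n)))"
proof -
  have "(norm (\<Sum>n\<in>K. w n *\<^sub>R grad n x))\<^sup>2 \<le> (\<Sum>n\<in>K. w n * (norm (grad n x))\<^sup>2)"
    by (rule norm_sum_scaleR_sq_le[OF \<open>finite K\<close> w_nonneg w_sum])
  also have "\<dots> \<le> (\<Sum>n\<in>K. w n * (2 * \<theta> * (f n x - f n (xmin n))))"
    using smooth_gradient_norm_sq_le[OF \<open>\<theta> > 0\<close> smooth min] w_nonneg
    by (intro sum_mono mult_left_mono) auto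
  finally show ?thesis by (simp add: sum_distrib_left algebra_simps)
qed

lemma inner_weighted_gradient_ge:
  fixes f :: "'i \<Rightarrow> 'v::real_inner \<Rightarrow> real"
  assumes w_nonneg: "\<And>n. n \<in> K \<Longrightarrow> w n \<ge> 0" and w_sum: "(\<Sum>n\<in>K. w n) = 1"
    and strconv: "\<And>n x y. n \<in> K \<Longrightarrow> f n y - f n x \<ge> (y - x) \<bullet> grad n x + \<rho> / 2 * (norm (y - x))\<^sup>2"
  shows "(\<Sum>n\<in>K. w n * (f n x - f n xstar)) + \<rho> / 2 * (norm (x - xstar))\<^sup>2
         \<le> (x - xstar) \<bullet> (\<Sum>n\<in>K. w n *\<^sub>R grad n x)"
proof -
  have "f n x - f n xstar + \<rho> / 2 * (norm (x - xstar))\<^sup>2 \<le> (x - xstar) \<bullet> grad n x" if "n \<in> K" for n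
    using strconv[OF that, where x=x and y=xstar] by (simp add: inner_diff_left norm_minus_commute)
  then have "(\<Sum>n\<in>K. w n * (f n x - f n xstar + \<rho> / 2 * (norm (x - xstar))\<^sup>2))
      \<le> (x - xstar) \<bullet> (\<Sum>n\<in>K. w n *\<^sub>R grad n x)"
    unfolding inner_sum_right using w_nonneg by (intro sum_mono) (simp add: mult_left_mono)
  then show ?thesis
    by (simp only: distrib_left sum.distrib flip: sum_distrib_right) (simp add: w_sum)
qed

lemma weighted_gradient_step_contraction:
  fixes f :: "'i \<Rightarrow> 'v::real_inner \<Rightarrow> real"
  assumes "finite K" and w_nonneg: "\<And>n. n \<in> K \<Longrightarrow> w n \<ge> 0" and w_sum: "(\<Sum>n\<in>K. w n) = 1"
    and smooth: "\<And>n x y. n \<in> K \<Longrightarrow> f n y - f n x \<le> (y - x) \<bullet> grad n x + \<theta> / 2 * (norm (y - x))\<^sup>2"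
    and strconv: "\<And>n x y. n \<in> K \<Longrightarrow> f n y - f n x \<ge> (y - x) \<bullet> grad n x + \<rho> / 2 * (norm (y - x))\<^sup>2"
    and min: "\<And>n x. n \<in> K \<Longrightarrow> f n (xmin n) \<le> f n x"
    and gap: "\<And>n. n \<in> K \<Longrightarrow> f n xstar - f n (xmin n) \<le> \<Gamma>"
    and "\<theta> > 0" "\<tau> \<ge> 0" "\<theta> * \<tau> \<le> 1"
  shows "(norm (x - xstar - \<tau> *\<^sub>R (\<Sum>n\<in>K. w n *\<^sub>R grad n x)))\<^sup>2
         \<le> (1 - \<rho> * \<tau>) * (norm (x - xstar))\<^sup>2 + 2 * \<tau> * \<Gamma>"
proof -
  define u where "u = x - xstar"
  define gb where "gb = (\<Sum>n\<in>K. w n *\<^sub>R grad n x)"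
  define a where "a = (\<Sum>n\<in>K. w n * (f n x - f n (xmin n)))"
  define b where "b = (\<Sum>n\<in>K. w n * (f n xstar - f n (xmin n)))"
  have "a \<ge> 0"
    unfolding a_def using min w_nonneg by (intro sum_nonneg mult_nonneg_nonneg) auto
  have "b \<le> (\<Sum>n\<in>K. w n * \<Gamma>)"
    unfolding b_def using gap w_nonneg by (intro sum_mono mult_left_mono) auto
  then have "b \<le> \<Gamma>" by (simp add: w_sum flip: sum_distrib_right)
  have "(\<Sum>n\<in>K. w n * (f n x - f n xstar)) = a - b"
    by (simp add: a_def b_def algebra_simps flip: sum_subtractf)
  with inner_weighted_gradient_ge[where f=f and grad=grad and x=x and xstar=xstar,
      OF w_nonneg w_sum strconv]
  have inner_ge: "a - b + \<rho> / 2 * (norm u)\<^sup>2 \<le> u \<bullet> gb" by (simp add: u_def gb_def)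
  have norm_le: "(norm gb)\<^sup>2 \<le> 2 * \<theta> * a"
    unfolding gb_def a_def by (rule norm_weighted_gradient_sq_le[OF assms(1-4) min \<open>\<theta> > 0\<close>])
  have "(norm (u - \<tau> *\<^sub>R gb))\<^sup>2 = (norm u)\<^sup>2 - 2 * \<tau> * (u \<bullet> gb) + \<tau>\<^sup>2 * (norm gb)\<^sup>2"
    by (rule norm_diff_scaleR_sq)
  also have "\<dots> \<le> (norm u)\<^sup>2 - 2 * \<tau> * (a - b + \<rho> / 2 * (norm u)\<^sup>2) + \<tau>\<^sup>2 * (2 * \<theta> * a)"
    using inner_ge norm_le \<open>\<tau> \<ge> 0\<close> by (intro add_mono diff_mono mult_left_mono) auto
  also have "\<dots> = (1 - \<rho> * \<tau>) * (norm u)\<^sup>2 + 2 * \<tau> * b - 2 * \<tau> * (1 - \<theta> * \<tau>) * a"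
    by (simp add: algebra_simps power2_eq_square)
  also have "\<dots> \<le> (1 - \<rho> * \<tau>) * (norm u)\<^sup>2 + 2 * \<tau> * \<Gamma>"
  proof -
    have "0 \<le> 2 * \<tau> * (1 - \<theta> * \<tau>) * a"
      using \<open>a \<ge> 0\<close> \<open>\<tau> \<ge> 0\<close> \<open>\<theta> * \<tau> \<le> 1\<close> by simp
    moreover have "2 * \<tau> * b \<le> 2 * \<tau> * \<Gamma>"
      using mult_left_mono[OF \<open>b \<le> \<Gamma>\<close>, of "2 * \<tau>"] \<open>\<tau> \<ge> 0\<close> by simp
    ultimately show ?thesis by linarith
  qed
  finally show ?thesis by (simp add: u_def gb_def)
qed

section \<open>Square-integrable random vectors\<close>

lemma integrable_nonneg_le:
  fixes f g :: "'a \<Rightarrow> real"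
  assumes "integrable M f" "g \<in> borel_measurable M" "AE x in M. 0 \<le> g x \<and> g x \<le> f x"
  shows "integrable M g"
  using assms(3) by (intro Bochner_Integration.integrable_bound[OF assms(1,2)]) auto

lemma integrable_mult_of_square_integrable:
  fixes f g :: "'a \<Rightarrow> real"
  assumes [measurable]: "f \<in> borel_measurable M" "g \<in> borel_measurable M"
    and "integrable M (\<lambda>\<omega>. (f \<omega>)\<^sup>2)" "integrable M (\<lambda>\<omega>. (g \<omega>)\<^sup>2)"
  shows "integrable M (\<lambda>\<omega>. f \<omega> * g \<omega>)"
proof (rule Bochner_Integration.integrable_bound)
  show "integrable M (\<lambda>\<omega>. (f \<omega>)\<^sup>2 + (g \<omega>)\<^sup>2)" using assms(3,4) by simp
  have "\<bar>f \<omega> * g \<omega>\<bar> \<le> (f \<omega>)\<^sup>2 + (g \<omega>)\<^sup>2" for \<omega>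
  proof -
    have "2 * \<bar>f \<omega> * g \<omega>\<bar> \<le> (f \<omega>)\<^sup>2 + (g \<omega>)\<^sup>2"
      using sum_squares_bound[of "\<bar>f \<omega>\<bar>" "\<bar>g \<omega>\<bar>"] by (simp add: abs_mult)
    then show ?thesis using abs_ge_zero[of "f \<omega> * g \<omega>"] by linarith
  qed
  then show "AE \<omega> in M. norm (f \<omega> * g \<omega>) \<le> norm ((f \<omega>)\<^sup>2 + (g \<omega>)\<^sup>2)" by simp
qed measurable

lemma integrable_vec_nth_sq:
  fixes f :: "'a \<Rightarrow> real^'d"
  assumes [measurable]: "f \<in> borel_measurable M" and "integrable M (\<lambda>\<omega>. (norm (f \<omega>))\<^sup>2)"
  shows "integrable M (\<lambda>\<omega>. (f \<omega> $ i)\<^sup>2)"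
proof (rule Bochner_Integration.integrable_bound[OF assms(2)])
  show "(\<lambda>\<omega>. (f \<omega> $ i)\<^sup>2) \<in> borel_measurable M" by measurable
qed (simp add: vec_nth_sq_le_norm_sq)

lemma integrable_inner_of_norm_sq:
  fixes f g :: "'a \<Rightarrow> real^'d"
  assumes "f \<in> borel_measurable M" "g \<in> borel_measurable M"
    and "integrable M (\<lambda>\<omega>. (norm (f \<omega>))\<^sup>2)" "integrable M (\<lambda>\<omega>. (norm (g \<omega>))\<^sup>2)"
  shows "integrable M (\<lambda>\<omega>. f \<omega> \<bullet> g \<omega>)"
proof -
  have "integrable M (\<lambda>\<omega>. f \<omega> $ i * g \<omega> $ i)" for i
    by (intro integrable_mult_of_square_integrable integrable_vec_nth_sq borel_measurable_vec_nth assms)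
  then show ?thesis by (simp add: inner_vec_def)
qed

lemma integral_norm_sq_diff_orthogonal:
  fixes A D :: "'a \<Rightarrow> real^'d"
  assumes "A \<in> borel_measurable M" "D \<in> borel_measurable M"
    and "integrable M (\<lambda>\<omega>. (norm (A \<omega>))\<^sup>2)" "integrable M (\<lambda>\<omega>. (norm (D \<omega>))\<^sup>2)"
    and orth: "(\<integral>\<omega>. A \<omega> \<bullet> D \<omega> \<partial>M) = 0"
  shows "integrable M (\<lambda>\<omega>. (norm (A \<omega> - c *\<^sub>R D \<omega>))\<^sup>2)"
    and "(\<integral>\<omega>. (norm (A \<omega> - c *\<^sub>R D \<omega>))\<^sup>2 \<partial>M)
         = (\<integral>\<omega>. (norm (A \<omega>))\<^sup>2 \<partial>M) + c\<^sup>2 * (\<integral>\<omega>. (norm (D \<omega>))\<^sup>2 \<partial>M)"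
proof -
  have "integrable M (\<lambda>\<omega>. A \<omega> \<bullet> D \<omega>)" by (rule integrable_inner_of_norm_sq[OF assms(1-4)])
  then show "integrable M (\<lambda>\<omega>. (norm (A \<omega> - c *\<^sub>R D \<omega>))\<^sup>2)"
    and "(\<integral>\<omega>. (norm (A \<omega> - c *\<^sub>R D \<omega>))\<^sup>2 \<partial>M)
         = (\<integral>\<omega>. (norm (A \<omega>))\<^sup>2 \<partial>M) + c\<^sup>2 * (\<integral>\<omega>. (norm (D \<omega>))\<^sup>2 \<partial>M)"
    unfolding norm_diff_scaleR_sq using assms(3,4) orth by simp_all
qed

section \<open>Independence and Gaussian noise\<close>

lemma sigma_sets_vimage_compose_subset:
  assumes Z: "Z \<in> measurable M R" and u: "u \<in> measurable R N"
  shows "sigma_sets (space M) {(\<lambda>\<omega>. u (Z \<omega>)) -` A \<inter> space M | A. A \<in> sets N}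
      \<subseteq> sigma_sets (space M) {Z -` A \<inter> space M | A. A \<in> sets R}"
proof (rule sigma_sets_subseteq, safe)
  fix A assume "A \<in> sets N"
  then have "(\<lambda>\<omega>. u (Z \<omega>)) -` A \<inter> space M = Z -` (u -` A \<inter> space R) \<inter> space M"
    "u -` A \<inter> space R \<in> sets R"
    using measurable_space[OF Z] measurable_sets[OF u] by auto
  then show "\<exists>B. (\<lambda>\<omega>. u (Z \<omega>)) -` A \<inter> space M = Z -` B \<inter> space M \<and> B \<in> sets R" by blast
qed

lemma sum_Some_image_insert_None:
  assumes "finite J"
  shows "(\<Sum>q\<in>(Some ` J \<union> {None}) \<times> {i}. f q) = (\<Sum>n\<in>J. f (Some n, i)) + f (None, i)"
proof -
  have "(Some ` J \<union> {None}) \<times> {i} = insert (None, i) ((\<lambda>n. (Some n, i)) ` J)" by auto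
  moreover have "inj_on (\<lambda>n. (Some n, i)) J" by (auto simp: inj_on_def)
  ultimately show ?thesis using assms by (simp add: sum.reindex add.commute image_iff)
qed

context prob_space
begin

lemma expectation_weighted_sum_le:
  fixes X :: "'i \<Rightarrow> 'a \<Rightarrow> real"
  assumes "\<And>n. n \<in> K \<Longrightarrow> w n \<ge> 0" "(\<Sum>n\<in>K. w n) = 1"
    and "\<And>n. n \<in> K \<Longrightarrow> integrable M (X n)" "\<And>n. n \<in> K \<Longrightarrow> expectation (X n) \<le> V"
  shows "expectation (\<lambda>\<omega>. \<Sum>n\<in>K. w n * X n \<omega>) \<le> V"
proof -
  have "expectation (\<lambda>\<omega>. \<Sum>n\<in>K. w n * X n \<omega>) = (\<Sum>n\<in>K. expectation (\<lambda>\<omega>. w n * X n \<omega>))"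
    using assms(3) by (intro Bochner_Integration.integral_sum integrable_mult_right) auto
  also have "\<dots> \<le> (\<Sum>n\<in>K. w n * V)"
    using assms(1,4) by (intro sum_mono) (simp add: mult_left_mono)
  finally show ?thesis by (simp add: assms(2) flip: sum_distrib_right)
qed

lemma centered_normal_distributed_moments:
  assumes "\<sigma> > 0" and D: "distributed M lborel X (normal_density 0 \<sigma>)"
  shows "integrable M X" "integrable M (\<lambda>\<omega>. (X \<omega>)\<^sup>2)"
    and "expectation X = 0" "expectation (\<lambda>\<omega>. (X \<omega>)\<^sup>2) = \<sigma>\<^sup>2"
proof -
  have "integrable lborel (\<lambda>x. normal_density 0 \<sigma> x * x)"
    using integrable_normal_moment_nz_1 \<open>\<sigma> > 0\<close> by blast
  then show "integrable M X"
    using distributed_integrable[OF D, of "\<lambda>x. x"] by simp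
  have "integrable lborel (\<lambda>x. normal_density 0 \<sigma> x * x\<^sup>2)"
    using integrable_normal_moment[of \<sigma> 0 2] \<open>\<sigma> > 0\<close> by simp
  then show "integrable M (\<lambda>\<omega>. (X \<omega>)\<^sup>2)"
    using distributed_integrable[OF D, of "\<lambda>x. x\<^sup>2"] by simp
  show "expectation X = 0" by (rule normal_distributed_expectation[OF assms])
  then show "expectation (\<lambda>\<omega>. (X \<omega>)\<^sup>2) = \<sigma>\<^sup>2"
    using normal_distributed_variance[OF assms] by simp
qed

lemma indep_vars_centered_product_moments:
  fixes Y :: "'i \<Rightarrow> 'a \<Rightarrow> real"
  assumes indep: "indep_vars (\<lambda>_. borel) Y I"
    and int: "\<And>k. k \<in> I \<Longrightarrow> integrable M (Y k)"
    and int_sq: "\<And>k. k \<in> I \<Longrightarrow> integrable M (\<lambda>\<omega>. (Y k \<omega>)\<^sup>2)"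
    and centered: "\<And>k. k \<in> I \<Longrightarrow> expectation (Y k) = 0"
    and "k \<in> I" "l \<in> I"
  shows "integrable M (\<lambda>\<omega>. Y k \<omega> * Y l \<omega>)"
    and "expectation (\<lambda>\<omega>. Y k \<omega> * Y l \<omega>) = (if k = l then expectation (\<lambda>\<omega>. (Y k \<omega>)\<^sup>2) else 0)"
proof -
  have "integrable M (\<lambda>\<omega>. Y k \<omega> * Y l \<omega>) \<and>
      expectation (\<lambda>\<omega>. Y k \<omega> * Y l \<omega>) = (if k = l then expectation (\<lambda>\<omega>. (Y k \<omega>)\<^sup>2) else 0)"
  proof (cases "k = l")
    case True
    then show ?thesis using int_sq[OF \<open>k \<in> I\<close>] by (simp add: power2_eq_square)
  next
    case False
    have "indep_vars (\<lambda>_. borel) Y (insert k {l})"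
      using assms(5,6) by (intro indep_vars_subset[OF indep]) auto
    from indep_vars_sum[OF _ _ this] False
    have "indep_var borel (Y k) borel (\<lambda>\<omega>. \<Sum>i\<in>{l}. Y i \<omega>)" by auto
    then have "indep_var borel (Y k) borel (Y l)" by simp
    then show ?thesis using False int centered assms(5,6)
      by (simp add: indep_var_integrable indep_var_lebesgue_integral)
  qed
  then show "integrable M (\<lambda>\<omega>. Y k \<omega> * Y l \<omega>)"
    and "expectation (\<lambda>\<omega>. Y k \<omega> * Y l \<omega>) = (if k = l then expectation (\<lambda>\<omega>. (Y k \<omega>)\<^sup>2) else 0)"
    by auto
qed

lemma expectation_sq_sum_indep_centered:
  fixes Y :: "'i \<Rightarrow> 'a \<Rightarrow> real"
  assumes "finite I" and indep: "indep_vars (\<lambda>_. borel) Y I"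
    and int: "\<And>k. k \<in> I \<Longrightarrow> integrable M (Y k)"
    and int_sq: "\<And>k. k \<in> I \<Longrightarrow> integrable M (\<lambda>\<omega>. (Y k \<omega>)\<^sup>2)"
    and centered: "\<And>k. k \<in> I \<Longrightarrow> expectation (Y k) = 0"
  shows "integrable M (\<lambda>\<omega>. (\<Sum>k\<in>I. a k * Y k \<omega>)\<^sup>2)"
    and "expectation (\<lambda>\<omega>. (\<Sum>k\<in>I. a k * Y k \<omega>)\<^sup>2) = (\<Sum>k\<in>I. (a k)\<^sup>2 * expectation (\<lambda>\<omega>. (Y k \<omega>)\<^sup>2))"
proof -
  note prod_int = indep_vars_centered_product_moments(1)[OF indep int int_sq centered]
    and prod_exp = indep_vars_centered_product_moments(2)[OF indep int int_sq centered]
  have sq: "(\<lambda>\<omega>. (\<Sum>k\<in>I. a k * Y k \<omega>)\<^sup>2) = (\<lambda>\<omega>. \<Sum>k\<in>I. \<Sum>l\<in>I. a k * a l * (Y k \<omega> * Y l \<omega>))"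
    by (auto simp: power2_eq_square sum_product intro!: sum.cong)
  show "integrable M (\<lambda>\<omega>. (\<Sum>k\<in>I. a k * Y k \<omega>)\<^sup>2)"
    unfolding sq by (intro Bochner_Integration.integrable_sum integrable_mult_right prod_int)
  have "expectation (\<lambda>\<omega>. (\<Sum>k\<in>I. a k * Y k \<omega>)\<^sup>2)
      = (\<Sum>k\<in>I. expectation (\<lambda>\<omega>. \<Sum>l\<in>I. a k * a l * (Y k \<omega> * Y l \<omega>)))"
    unfolding sq
    by (intro Bochner_Integration.integral_sum Bochner_Integration.integrable_sum
        integrable_mult_right prod_int)
  also have "\<dots> = (\<Sum>k\<in>I. \<Sum>l\<in>I. expectation (\<lambda>\<omega>. a k * a l * (Y k \<omega> * Y l \<omega>)))"
    by (intro sum.cong refl Bochner_Integration.integral_sum integrable_mult_right prod_int)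
  also have "\<dots> = (\<Sum>k\<in>I. \<Sum>l\<in>I. a k * a l * expectation (\<lambda>\<omega>. Y k \<omega> * Y l \<omega>))"
    by simp
  also have "\<dots> = (\<Sum>k\<in>I. \<Sum>l\<in>I. if l = k then a k * a l * expectation (\<lambda>\<omega>. (Y k \<omega>)\<^sup>2) else 0)"
    using prod_exp by (intro sum.cong refl) auto
  also have "\<dots> = (\<Sum>k\<in>I. (a k)\<^sup>2 * expectation (\<lambda>\<omega>. (Y k \<omega>)\<^sup>2))"
    using \<open>finite I\<close> by (simp add: power2_eq_square)
  finally show "expectation (\<lambda>\<omega>. (\<Sum>k\<in>I. a k * Y k \<omega>)\<^sup>2)
      = (\<Sum>k\<in>I. (a k)\<^sup>2 * expectation (\<lambda>\<omega>. (Y k \<omega>)\<^sup>2))" .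
qed

lemma expectation_inner_indep_centered:
  fixes X R :: "'a \<Rightarrow> real^'d"
  assumes indep: "indep_var borel R borel X"
    and "integrable M (\<lambda>\<omega>. (norm (X \<omega>))\<^sup>2)" "integrable M (\<lambda>\<omega>. (norm (R \<omega>))\<^sup>2)"
    and centered: "\<And>i. expectation (\<lambda>\<omega>. R \<omega> $ i) = 0"
  shows "expectation (\<lambda>\<omega>. X \<omega> \<bullet> R \<omega>) = 0"
proof -
  have meas: "X \<in> borel_measurable M" "R \<in> borel_measurable M"
    using indep unfolding indep_var_eq by auto
  have int: "integrable M (\<lambda>\<omega>. R \<omega> $ i)" "integrable M (\<lambda>\<omega>. X \<omega> $ i)" for i
    using meas assms(2,3)
    by (auto intro!: square_integrable_imp_integrable integrable_vec_nth_sq borel_measurable_vec_nth)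
  have "expectation (\<lambda>\<omega>. R \<omega> $ i * X \<omega> $ i) = 0" for i
  proof -
    have "indep_var borel (\<lambda>\<omega>. R \<omega> $ i) borel (\<lambda>\<omega>. X \<omega> $ i)"
      using indep_var_compose[OF indep borel_measurable_nth borel_measurable_nth] by (simp add: comp_def)
    from indep_var_lebesgue_integral[OF this int] centered show ?thesis by simp
  qed
  moreover have "integrable M (\<lambda>\<omega>. R \<omega> $ i * X \<omega> $ i)" for i
    by (intro integrable_mult_of_square_integrable integrable_vec_nth_sq borel_measurable_vec_nth
        assms(2,3) meas)
  ultimately show ?thesis by (simp add: inner_vec_def mult.commute Bochner_Integration.integral_sum)
qed

lemma expectation_norm_sq_diff_indep_centered:
  fixes X R :: "'a \<Rightarrow> real^'d"
  assumes indep: "indep_var borel R borel X"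
    and X_L2: "integrable M (\<lambda>\<omega>. (norm (X \<omega>))\<^sup>2)" and R_L2: "integrable M (\<lambda>\<omega>. (norm (R \<omega>))\<^sup>2)"
    and "\<And>i. expectation (\<lambda>\<omega>. R \<omega> $ i) = 0"
  shows "expectation (\<lambda>\<omega>. (norm (X \<omega> - c *\<^sub>R R \<omega>))\<^sup>2)
         = expectation (\<lambda>\<omega>. (norm (X \<omega>))\<^sup>2) + c\<^sup>2 * expectation (\<lambda>\<omega>. (norm (R \<omega>))\<^sup>2)"
proof -
  have "X \<in> borel_measurable M" "R \<in> borel_measurable M"
    using indep unfolding indep_var_eq by auto
  from integral_norm_sq_diff_orthogonal(2)[OF this X_L2 R_L2 expectation_inner_indep_centered[OF assms]]
  show ?thesis .
qed

lemma indep_var_compose_generating: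
  assumes indep: "indep_set (sigma_sets (space M) {X -` A \<inter> space M | A. A \<in> sets S})
                            (sigma_sets (space M) {Y -` A \<inter> space M | A. A \<in> sets T})"
    and "X \<in> measurable M S" "Y \<in> measurable M T" "f \<in> measurable S N" "h \<in> measurable T N'"
  shows "indep_var N (\<lambda>\<omega>. f (X \<omega>)) N' (\<lambda>\<omega>. h (Y \<omega>))"
  unfolding indep_var_eq
proof (intro conjI)
  show "random_variable N (\<lambda>\<omega>. f (X \<omega>))" "random_variable N' (\<lambda>\<omega>. h (Y \<omega>))"
    using assms(2-5) by (auto intro: measurable_compose)
  show "indep_set (sigma_sets (space M) {(\<lambda>\<omega>. f (X \<omega>)) -` A \<inter> space M | A. A \<in> sets N})
      (sigma_sets (space M) {(\<lambda>\<omega>. h (Y \<omega>)) -` A \<inter> space M | A. A \<in> sets N'})"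
    using sigma_sets_vimage_compose_subset[OF assms(2,4)] sigma_sets_vimage_compose_subset[OF assms(3,5)]
    unfolding indep_set_def
    by (intro indep_sets_mono_sets[OF indep[unfolded indep_set_def]]) (auto split: bool.split)
qed

lemma gaussian_noise_moments:
  fixes e :: "nat \<Rightarrow> 'a \<Rightarrow> real^'d" and r :: "'a \<Rightarrow> real^'d" and c :: "nat \<Rightarrow> real"
  assumes "finite J" and "\<sigma> > 0"
    and e_gauss: "\<And>n i. n \<in> J \<Longrightarrow> distributed M lborel (\<lambda>\<omega>. e n \<omega> $ i) std_normal_density"
    and r_gauss: "\<And>i. distributed M lborel (\<lambda>\<omega>. r \<omega> $ i) (normal_density 0 (sqrt \<sigma>))"
    and indep: "indep_vars (\<lambda>_. borel) (noise_fam e r) ((Some ` J \<union> {None}) \<times> UNIV)"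
  defines "R \<equiv> \<lambda>\<omega>. (\<Sum>n\<in>J. c n *\<^sub>R e n \<omega>) + r \<omega>"
  shows "\<And>i. expectation (\<lambda>\<omega>. R \<omega> $ i) = 0"
    and "integrable M (\<lambda>\<omega>. (norm (R \<omega>))\<^sup>2)"
    and "expectation (\<lambda>\<omega>. (norm (R \<omega>))\<^sup>2) = real CARD('d) * ((\<Sum>n\<in>J. (c n)\<^sup>2) + \<sigma>)"
proof -
  define I where "I i = (Some ` J \<union> {None}) \<times> {i}" for i :: 'd
  define coef where "coef k = (case k of Some n \<Rightarrow> c n | None \<Rightarrow> 1)" for k
  have coord: "R \<omega> $ i = (\<Sum>q\<in>I i. coef (fst q) * noise_fam e r q \<omega>)" for \<omega> i
    unfolding I_def sum_Some_image_insert_None[OF \<open>finite J\<close>]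
    by (simp add: R_def coef_def noise_fam_def)
  have noise_Some: "noise_fam e r (Some n, i) = (\<lambda>\<omega>. e n \<omega> $ i)"
    and noise_None: "noise_fam e r (None, i) = (\<lambda>\<omega>. r \<omega> $ i)" for n i
    by (simp_all add: noise_fam_def fun_eq_iff)
  have "sqrt \<sigma> > 0" using \<open>\<sigma> > 0\<close> by simp
  note e_moments = centered_normal_distributed_moments[OF zero_less_one e_gauss]
    and r_moments = centered_normal_distributed_moments[OF \<open>sqrt \<sigma> > 0\<close> r_gauss]
  have noise_int: "integrable M (noise_fam e r q)"
    and noise_int_sq: "integrable M (\<lambda>\<omega>. (noise_fam e r q \<omega>)\<^sup>2)"
    and noise_centered: "expectation (noise_fam e r q) = 0" if "q \<in> I i" for q i
    using that e_moments r_moments by (auto simp: I_def noise_Some noise_None)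
  have indep_I: "indep_vars (\<lambda>_. borel) (noise_fam e r) (I i)" for i
    by (rule indep_vars_subset[OF indep]) (auto simp: I_def)
  have coord_sq: "integrable M (\<lambda>\<omega>. (R \<omega> $ i)\<^sup>2)"
      "expectation (\<lambda>\<omega>. (R \<omega> $ i)\<^sup>2) = (\<Sum>n\<in>J. (c n)\<^sup>2) + \<sigma>" for i
  proof -
    have "finite (I i)" using \<open>finite J\<close> by (simp add: I_def)
    note sq = expectation_sq_sum_indep_centered[OF this indep_I noise_int noise_int_sq noise_centered,
        where a = "\<lambda>q. coef (fst q)"]
    have "(\<Sum>q\<in>I i. (coef (fst q))\<^sup>2 * expectation (\<lambda>\<omega>. (noise_fam e r q \<omega>)\<^sup>2))
        = (\<Sum>n\<in>J. (c n)\<^sup>2) + \<sigma>"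
      unfolding I_def sum_Some_image_insert_None[OF \<open>finite J\<close>] using \<open>\<sigma> > 0\<close>
      by (simp add: coef_def noise_Some noise_None e_moments r_moments)
    with sq show "integrable M (\<lambda>\<omega>. (R \<omega> $ i)\<^sup>2)"
      "expectation (\<lambda>\<omega>. (R \<omega> $ i)\<^sup>2) = (\<Sum>n\<in>J. (c n)\<^sup>2) + \<sigma>"
      by (simp_all add: coord)
  qed
  show "expectation (\<lambda>\<omega>. R \<omega> $ i) = 0" for i
    using noise_int noise_centered by (simp add: coord Bochner_Integration.integral_sum)
  show "integrable M (\<lambda>\<omega>. (norm (R \<omega>))\<^sup>2)"
    using coord_sq by (simp add: norm_sq_vec_eq_sum)
  show "expectation (\<lambda>\<omega>. (norm (R \<omega>))\<^sup>2) = real CARD('d) * ((\<Sum>n\<in>J. (c n)\<^sup>2) + \<sigma>)"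
    using coord_sq by (simp add: norm_sq_vec_eq_sum Bochner_Integration.integral_sum)
qed

lemma expectation_norm_sq_diff_gaussian_noise:
  fixes e :: "nat \<Rightarrow> 'a \<Rightarrow> real^'d" and r m X :: "'a \<Rightarrow> real^'d" and g :: "nat \<Rightarrow> 'a \<Rightarrow> real^'d"
    and f :: "(real^'d) \<times> (nat \<Rightarrow> real^'d) \<Rightarrow> real^'d"
  assumes "finite J" "\<sigma> > 0"
    and e_gauss: "\<And>n i. n \<in> J \<Longrightarrow> distributed M lborel (\<lambda>\<omega>. e n \<omega> $ i) std_normal_density"
    and r_gauss: "\<And>i. distributed M lborel (\<lambda>\<omega>. r \<omega> $ i) (normal_density 0 (sqrt \<sigma>))"
    and noise_indep: "indep_vars (\<lambda>_. borel) (noise_fam e r) ((Some ` J \<union> {None}) \<times> UNIV)"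
    and noise_indep_data: "indep_set
        (sigma_sets (space M) {(\<lambda>\<omega>. \<lambda>k\<in>(Some ` J \<union> {None}) \<times> UNIV. noise_fam e r k \<omega>) -` A \<inter> space M
           | A. A \<in> sets (PiM ((Some ` J \<union> {None}) \<times> UNIV) (\<lambda>_. borel))})
        (sigma_sets (space M) {(\<lambda>\<omega>. (m \<omega>, \<lambda>n\<in>K. g n \<omega>)) -` A \<inter> space M
           | A. A \<in> sets (borel \<Otimes>\<^sub>M PiM K (\<lambda>_. borel))})"
    and m_meas: "m \<in> borel_measurable M" and g_meas: "\<And>n. n \<in> K \<Longrightarrow> g n \<in> borel_measurable M"
    and f_meas: "f \<in> borel_measurable (borel \<Otimes>\<^sub>M PiM K (\<lambda>_. borel))"
    and X_eq: "\<And>\<omega>. X \<omega> = f (m \<omega>, \<lambda>n\<in>K. g n \<omega>)"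
    and X_L2: "integrable M (\<lambda>\<omega>. (norm (X \<omega>))\<^sup>2)"
  shows "expectation (\<lambda>\<omega>. (norm (X \<omega> - a *\<^sub>R ((\<Sum>n\<in>J. c n *\<^sub>R e n \<omega>) + r \<omega>)))\<^sup>2)
         = expectation (\<lambda>\<omega>. (norm (X \<omega>))\<^sup>2) + a\<^sup>2 * (real CARD('d) * ((\<Sum>n\<in>J. (c n)\<^sup>2) + \<sigma>))"
proof -
  define I where "I = (Some ` J \<union> {None}) \<times> (UNIV :: 'd set)"
  define R where "R \<omega> = (\<Sum>n\<in>J. c n *\<^sub>R e n \<omega>) + r \<omega>" for \<omega>
  define fR where "fR v = (\<Sum>n\<in>J. c n *\<^sub>R (\<chi> i. v (Some n, i))) + (\<chi> i. v (None, i))"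
    for v :: "nat option \<times> 'd \<Rightarrow> real"
  note noise = gaussian_noise_moments[OF \<open>finite J\<close> \<open>\<sigma> > 0\<close> e_gauss r_gauss noise_indep,
      where c = c, folded R_def]
  have "indep_var borel (\<lambda>\<omega>. fR (\<lambda>k\<in>I. noise_fam e r k \<omega>)) borel (\<lambda>\<omega>. f (m \<omega>, \<lambda>n\<in>K. g n \<omega>))"
  proof (rule indep_var_compose_generating[OF noise_indep_data[folded I_def] _ _ _ f_meas])
    show "(\<lambda>\<omega>. \<lambda>k\<in>I. noise_fam e r k \<omega>) \<in> measurable M (PiM I (\<lambda>_. borel))"
      using noise_indep unfolding indep_vars_def I_def by (intro measurable_restrict) auto
    show "(\<lambda>\<omega>. (m \<omega>, \<lambda>n\<in>K. g n \<omega>)) \<in> measurable M (borel \<Otimes>\<^sub>M PiM K (\<lambda>_. borel))"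
      using m_meas g_meas by (intro measurable_Pair measurable_restrict) auto
    show "fR \<in> borel_measurable (PiM I (\<lambda>_. borel))"
      unfolding fR_def borel_measurable_vec_iff I_def
      by (intro allI borel_measurable_add borel_measurable_sum borel_measurable_scaleR
          borel_measurable_const measurable_component_singleton) auto
  qed
  moreover have "(\<lambda>\<omega>. fR (\<lambda>k\<in>I. noise_fam e r k \<omega>)) = R"
    by (auto simp: fR_def R_def I_def noise_fam_def fun_eq_iff vec_eq_iff intro!: sum.cong)
  ultimately have "indep_var borel R borel X" by (simp add: X_eq[abs_def])
  from expectation_norm_sq_diff_indep_centered[OF this X_L2 noise(2) noise(1)] noise(3)
  show ?thesis by (simp add: R_def)
qed

end

section \<open>Conditional expectation of random vectors\<close>

definition vec_cond_exp :: "'a measure \<Rightarrow> 'a measure \<Rightarrow> ('a \<Rightarrow> real^'d) \<Rightarrow> 'a \<Rightarrow> real^'d" where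
  "vec_cond_exp M F Z \<omega> = (\<chi> i. real_cond_exp M F (\<lambda>\<omega>. Z \<omega> $ i) \<omega>)"

lemma subalgebra_vimage_algebra:
  assumes "X \<in> measurable M N"
  shows "subalgebra M (vimage_algebra (space M) X N)"
  unfolding subalgebra_def
  using measurable_sets[OF assms] measurable_space[OF assms]
  by (subst sets_vimage_algebra2) (auto simp: assms)

context sigma_finite_subalgebra
begin

lemma borel_measurable_vec_cond_exp [measurable]:
  "vec_cond_exp M F Z \<in> borel_measurable F"
  unfolding vec_cond_exp_def[abs_def] borel_measurable_vec_iff by simp

lemma AE_vec_cond_exp_eqI:
  fixes Z Y :: "'a \<Rightarrow> real^'d"
  assumes "\<And>i. AE \<omega> in M. real_cond_exp M F (\<lambda>\<omega>. Z \<omega> $ i) \<omega> = Y \<omega> $ i"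
  shows "AE \<omega> in M. vec_cond_exp M F Z \<omega> = Y \<omega>"
proof -
  have "AE \<omega> in M. \<forall>i\<in>UNIV. real_cond_exp M F (\<lambda>\<omega>. Z \<omega> $ i) \<omega> = Y \<omega> $ i"
    using assms by (intro AE_finite_allI) auto
  then show ?thesis by eventually_elim (simp add: vec_cond_exp_def vec_eq_iff)
qed

lemma vec_cond_exp_sum_scaleR:
  fixes Z :: "'i \<Rightarrow> 'a \<Rightarrow> real^'d"
  assumes "finite K" and int: "\<And>n i. n \<in> K \<Longrightarrow> integrable M (\<lambda>\<omega>. Z n \<omega> $ i)"
  shows "AE \<omega> in M. vec_cond_exp M F (\<lambda>\<omega>. \<Sum>n\<in>K. w n *\<^sub>R Z n \<omega>) \<omega>
                   = (\<Sum>n\<in>K. w n *\<^sub>R vec_cond_exp M F (Z n) \<omega>)"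
proof -
  \<comment> \<open>padded with 0 outside K, since real_cond_exp_sum wants every summand integrable\<close>
  define f where "f i n = (\<lambda>\<omega>. if n \<in> K then w n * Z n \<omega> $ i else 0)" for i n
  have "integrable M (f i n)" for i n
    using int by (cases "n \<in> K") (simp_all add: f_def)
  then have "AE \<omega> in M. \<forall>i\<in>UNIV. real_cond_exp M F (\<lambda>\<omega>. \<Sum>n\<in>K. f i n \<omega>) \<omega>
                                = (\<Sum>n\<in>K. real_cond_exp M F (f i n) \<omega>)"
    by (intro AE_finite_allI real_cond_exp_sum) auto
  moreover have "AE \<omega> in M. \<forall>(i, n)\<in>UNIV \<times> K.
      real_cond_exp M F (f i n) \<omega> = w n * real_cond_exp M F (\<lambda>\<omega>. Z n \<omega> $ i) \<omega>"
    using int \<open>finite K\<close> by (intro AE_finite_allI) (auto simp: f_def)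
  ultimately show ?thesis
  proof eventually_elim
    case (elim \<omega>)
    have "(\<lambda>\<omega>. (\<Sum>n\<in>K. w n *\<^sub>R Z n \<omega>) $ i) = (\<lambda>\<omega>. \<Sum>n\<in>K. f i n \<omega>)" for i
      by (simp add: f_def)
    with elim show ?case
      by (simp add: vec_cond_exp_def vec_eq_iff)
  qed
qed

lemma AE_vec_cond_exp_sum_scaleR_eq:
  fixes Z Y :: "'i \<Rightarrow> 'a \<Rightarrow> real^'d"
  assumes "finite K" and "\<And>n i. n \<in> K \<Longrightarrow> integrable M (\<lambda>\<omega>. Z n \<omega> $ i)"
    and cond_exp: "\<And>n i. n \<in> K \<Longrightarrow> AE \<omega> in M. real_cond_exp M F (\<lambda>\<omega>. Z n \<omega> $ i) \<omega> = Y n \<omega> $ i"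
  shows "AE \<omega> in M. vec_cond_exp M F (\<lambda>\<omega>. \<Sum>n\<in>K. w n *\<^sub>R Z n \<omega>) \<omega> = (\<Sum>n\<in>K. w n *\<^sub>R Y n \<omega>)"
proof -
  have "AE \<omega> in M. vec_cond_exp M F (Z n) \<omega> = Y n \<omega>" if "n \<in> K" for n
    using cond_exp[OF that] by (rule AE_vec_cond_exp_eqI)
  then have "AE \<omega> in M. \<forall>n\<in>K. vec_cond_exp M F (Z n) \<omega> = Y n \<omega>"
    using \<open>finite K\<close> by (intro AE_finite_allI) auto
  moreover have "AE \<omega> in M. vec_cond_exp M F (\<lambda>\<omega>. \<Sum>n\<in>K. w n *\<^sub>R Z n \<omega>) \<omega>
                 = (\<Sum>n\<in>K. w n *\<^sub>R vec_cond_exp M F (Z n) \<omega>)"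
    by (rule vec_cond_exp_sum_scaleR[OF assms(1)]) (rule assms(2))
  ultimately show ?thesis by eventually_elim simp
qed

lemma integral_inner_vec_cond_exp_residual:
  fixes A Z :: "'a \<Rightarrow> real^'d"
  assumes A_F: "A \<in> borel_measurable F" and [measurable]: "Z \<in> borel_measurable M"
    and "integrable M (\<lambda>\<omega>. (norm (A \<omega>))\<^sup>2)" "integrable M (\<lambda>\<omega>. (norm (Z \<omega>))\<^sup>2)"
  shows "(\<integral>\<omega>. A \<omega> \<bullet> (Z \<omega> - vec_cond_exp M F Z \<omega>) \<partial>M) = 0"
proof -
  have [measurable]: "A \<in> borel_measurable M" by (rule measurable_from_subalg[OF subalg A_F])
  have prod: "integrable M (\<lambda>\<omega>. A \<omega> $ i * Z \<omega> $ i)" for i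
    by (intro integrable_mult_of_square_integrable integrable_vec_nth_sq borel_measurable_vec_nth
        assms \<open>A \<in> borel_measurable M\<close>)
  have A_i: "(\<lambda>\<omega>. A \<omega> $ i) \<in> borel_measurable F" for i using A_F by measurable
  have "A \<omega> \<bullet> (Z \<omega> - vec_cond_exp M F Z \<omega>)
      = (\<Sum>i\<in>UNIV. A \<omega> $ i * Z \<omega> $ i - A \<omega> $ i * real_cond_exp M F (\<lambda>\<omega>. Z \<omega> $ i) \<omega>)" for \<omega>
    by (simp add: inner_vec_def vec_cond_exp_def algebra_simps)
  then show ?thesis
    using prod real_cond_exp_intg[OF prod A_i] by (simp add: Bochner_Integration.integral_sum)
qed

lemma integral_norm_sq_step_cond_exp_le:
  fixes U Z :: "'a \<Rightarrow> real^'d" and a b :: "'a \<Rightarrow> real"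
  assumes U_F: "U \<in> borel_measurable F" and [measurable]: "Z \<in> borel_measurable M"
    and Z_L2: "integrable M (\<lambda>\<omega>. (norm (Z \<omega>))\<^sup>2)"
    and "integrable M a" "integrable M b"
    and A_le: "AE \<omega> in M. (norm (U \<omega> - \<tau> *\<^sub>R vec_cond_exp M F Z \<omega>))\<^sup>2 \<le> a \<omega>"
    and D_le: "AE \<omega> in M. (norm (Z \<omega> - vec_cond_exp M F Z \<omega>))\<^sup>2 \<le> b \<omega>"
  shows "integrable M (\<lambda>\<omega>. (norm (U \<omega> - \<tau> *\<^sub>R Z \<omega>))\<^sup>2)"
    and "(\<integral>\<omega>. (norm (U \<omega> - \<tau> *\<^sub>R Z \<omega>))\<^sup>2 \<partial>M) \<le> (\<integral>\<omega>. a \<omega> \<partial>M) + \<tau>\<^sup>2 * (\<integral>\<omega>. b \<omega> \<partial>M)"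
proof -
  define C where "C = vec_cond_exp M F Z"
  have A_F: "(\<lambda>\<omega>. U \<omega> - \<tau> *\<^sub>R C \<omega>) \<in> borel_measurable F"
    using U_F unfolding C_def by measurable
  have [measurable]: "C \<in> borel_measurable M" "U \<in> borel_measurable M"
    unfolding C_def by (intro measurable_from_subalg[OF subalg] U_F borel_measurable_vec_cond_exp)+
  have A_L2: "integrable M (\<lambda>\<omega>. (norm (U \<omega> - \<tau> *\<^sub>R C \<omega>))\<^sup>2)"
    by (rule integrable_nonneg_le[OF \<open>integrable M a\<close>]) (use A_le in \<open>measurable, auto simp: C_def\<close>)
  have D_L2: "integrable M (\<lambda>\<omega>. (norm (Z \<omega> - C \<omega>))\<^sup>2)"
    by (rule integrable_nonneg_le[OF \<open>integrable M b\<close>]) (use D_le in \<open>measurable, auto simp: C_def\<close>)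
  have "(\<integral>\<omega>. (U \<omega> - \<tau> *\<^sub>R C \<omega>) \<bullet> (Z \<omega> - C \<omega>) \<partial>M) = 0"
    using integral_inner_vec_cond_exp_residual[OF A_F \<open>Z \<in> borel_measurable M\<close> A_L2 Z_L2]
    by (simp add: C_def)
  note pythagoras = integral_norm_sq_diff_orthogonal[OF _ _ A_L2 D_L2 this, of \<tau>]
  have split: "U \<omega> - \<tau> *\<^sub>R Z \<omega> = (U \<omega> - \<tau> *\<^sub>R C \<omega>) - \<tau> *\<^sub>R (Z \<omega> - C \<omega>)" for \<omega>
    by (simp add: algebra_simps)
  show "integrable M (\<lambda>\<omega>. (norm (U \<omega> - \<tau> *\<^sub>R Z \<omega>))\<^sup>2)"
    unfolding split using pythagoras(1) by simp
  have "(\<integral>\<omega>. (norm (U \<omega> - \<tau> *\<^sub>R Z \<omega>))\<^sup>2 \<partial>M)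
      = (\<integral>\<omega>. (norm (U \<omega> - \<tau> *\<^sub>R C \<omega>))\<^sup>2 \<partial>M) + \<tau>\<^sup>2 * (\<integral>\<omega>. (norm (Z \<omega> - C \<omega>))\<^sup>2 \<partial>M)"
    unfolding split using pythagoras(2) by simp
  also have "\<dots> \<le> (\<integral>\<omega>. a \<omega> \<partial>M) + \<tau>\<^sup>2 * (\<integral>\<omega>. b \<omega> \<partial>M)"
    using A_le D_le
    by (intro add_mono mult_left_mono integral_mono_AE A_L2 D_L2 \<open>integrable M a\<close> \<open>integrable M b\<close>)
       (simp_all add: C_def)
  finally show "(\<integral>\<omega>. (norm (U \<omega> - \<tau> *\<^sub>R Z \<omega>))\<^sup>2 \<partial>M) \<le> (\<integral>\<omega>. a \<omega> \<partial>M) + \<tau>\<^sup>2 * (\<integral>\<omega>. b \<omega> \<partial>M)" .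
qed

end

section \<open>One round of noisy aggregation\<close>

lemma (in prob_space) stochastic_gradient_step_mean_sq_le:
  fixes m :: "'a \<Rightarrow> real^'d" and g :: "'i \<Rightarrow> 'a \<Rightarrow> real^'d"
    and f :: "'i \<Rightarrow> real^'d \<Rightarrow> real" and grad :: "'i \<Rightarrow> real^'d \<Rightarrow> real^'d"
  assumes "finite K" and w_nonneg: "\<And>n. n \<in> K \<Longrightarrow> w n \<ge> 0" and w_sum: "(\<Sum>n\<in>K. w n) = 1"
    and smooth: "\<And>n x y. n \<in> K \<Longrightarrow> f n y - f n x \<le> (y - x) \<bullet> grad n x + \<theta> / 2 * (norm (y - x))\<^sup>2"
    and strconv: "\<And>n x y. n \<in> K \<Longrightarrow> f n y - f n x \<ge> (y - x) \<bullet> grad n x + \<rho> / 2 * (norm (y - x))\<^sup>2"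
    and min: "\<And>n x. n \<in> K \<Longrightarrow> f n (xmin n) \<le> f n x"
    and gap: "\<And>n. n \<in> K \<Longrightarrow> f n xstar - f n (xmin n) \<le> \<Gamma>"
    and "\<theta> > 0" "\<tau> \<ge> 0" "\<theta> * \<tau> \<le> 1"
    and m_meas: "m \<in> borel_measurable M"
    and m_L2: "integrable M (\<lambda>\<omega>. (norm (m \<omega> - xstar))\<^sup>2)"
    and g_meas: "\<And>n. n \<in> K \<Longrightarrow> g n \<in> borel_measurable M"
    and g_bound: "\<And>n \<omega>. n \<in> K \<Longrightarrow> \<omega> \<in> space M \<Longrightarrow> norm (g n \<omega>) \<le> G"
    and unbiased: "\<And>n i. n \<in> K \<Longrightarrow>
        AE \<omega> in M. real_cond_exp M (vimage_algebra (space M) m borel) (\<lambda>\<omega>. g n \<omega> $ i) \<omega>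
                     = grad n (m \<omega>) $ i"
    and var_int: "\<And>n. n \<in> K \<Longrightarrow> integrable M (\<lambda>\<omega>. (norm (g n \<omega> - grad n (m \<omega>)))\<^sup>2)"
    and var_bound: "\<And>n. n \<in> K \<Longrightarrow> expectation (\<lambda>\<omega>. (norm (g n \<omega> - grad n (m \<omega>)))\<^sup>2) \<le> V"
  defines "ghat \<equiv> \<lambda>\<omega>. \<Sum>n\<in>K. w n *\<^sub>R g n \<omega>"
  shows "integrable M (\<lambda>\<omega>. (norm (m \<omega> - xstar - \<tau> *\<^sub>R ghat \<omega>))\<^sup>2)"
    and "expectation (\<lambda>\<omega>. (norm (m \<omega> - xstar - \<tau> *\<^sub>R ghat \<omega>))\<^sup>2)
         \<le> (1 - \<rho> * \<tau>) * expectation (\<lambda>\<omega>. (norm (m \<omega> - xstar))\<^sup>2) + 2 * \<tau> * \<Gamma> + \<tau>\<^sup>2 * V"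
proof -
  define F where "F = vimage_algebra (space M) m borel"
  interpret finite_measure_subalgebra M F
    by unfold_locales (simp add: F_def subalgebra_vimage_algebra m_meas)
  have U_F: "(\<lambda>\<omega>. m \<omega> - xstar) \<in> borel_measurable F"
    using measurable_vimage_algebra1[of m "space M" borel] unfolding F_def by measurable
  have [measurable]: "ghat \<in> borel_measurable M"
    unfolding ghat_def using g_meas by measurable
  have g_int: "integrable M (\<lambda>\<omega>. g n \<omega> $ i)" if "n \<in> K" for n i
    using g_meas[OF that] g_bound[OF that] component_le_norm_cart[of "g n _" i]
    by (intro integrable_const_bound[where B=G] AE_I2) (auto intro: order_trans)
  have "norm (ghat \<omega>) \<le> G" if "\<omega> \<in> space M" for \<omega>
    unfolding ghat_def by (intro norm_sum_scaleR_le[OF w_nonneg w_sum] g_bound that)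
  then have ghat_L2: "integrable M (\<lambda>\<omega>. (norm (ghat \<omega>))\<^sup>2)"
    by (intro integrable_const_bound[where B="G\<^sup>2"] AE_I2) (auto intro: power_mono)
  have cond_exp_eq: "AE \<omega> in M. vec_cond_exp M F ghat \<omega> = (\<Sum>n\<in>K. w n *\<^sub>R grad n (m \<omega>))"
    unfolding ghat_def
    by (rule AE_vec_cond_exp_sum_scaleR_eq[OF \<open>finite K\<close>]) (auto intro: g_int unbiased[folded F_def])
  have A_le: "AE \<omega> in M. (norm (m \<omega> - xstar - \<tau> *\<^sub>R vec_cond_exp M F ghat \<omega>))\<^sup>2
                \<le> (1 - \<rho> * \<tau>) * (norm (m \<omega> - xstar))\<^sup>2 + 2 * \<tau> * \<Gamma>"
    using cond_exp_eq by eventually_elim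
      (simp add: weighted_gradient_step_contraction[OF \<open>finite K\<close> w_nonneg w_sum smooth strconv min gap
        \<open>\<theta> > 0\<close> \<open>\<tau> \<ge> 0\<close> \<open>\<theta> * \<tau> \<le> 1\<close>])
  have D_le: "AE \<omega> in M. (norm (ghat \<omega> - vec_cond_exp M F ghat \<omega>))\<^sup>2
                \<le> (\<Sum>n\<in>K. w n * (norm (g n \<omega> - grad n (m \<omega>)))\<^sup>2)"
    using cond_exp_eq
  proof eventually_elim
    case (elim \<omega>)
    have "ghat \<omega> - vec_cond_exp M F ghat \<omega> = (\<Sum>n\<in>K. w n *\<^sub>R (g n \<omega> - grad n (m \<omega>)))"
      unfolding elim by (simp add: ghat_def scaleR_diff_right sum_subtractf)
    then show ?case by (simp add: norm_sum_scaleR_sq_le[OF \<open>finite K\<close> w_nonneg w_sum])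
  qed
  have "integrable M (\<lambda>\<omega>. \<Sum>n\<in>K. w n * (norm (g n \<omega> - grad n (m \<omega>)))\<^sup>2)"
    using var_int by simp
  moreover have "integrable M (\<lambda>\<omega>. (1 - \<rho> * \<tau>) * (norm (m \<omega> - xstar))\<^sup>2 + 2 * \<tau> * \<Gamma>)"
    using m_L2 by simp
  ultimately have step:
    "integrable M (\<lambda>\<omega>. (norm (m \<omega> - xstar - \<tau> *\<^sub>R ghat \<omega>))\<^sup>2)"
    "expectation (\<lambda>\<omega>. (norm (m \<omega> - xstar - \<tau> *\<^sub>R ghat \<omega>))\<^sup>2)
       \<le> expectation (\<lambda>\<omega>. (1 - \<rho> * \<tau>) * (norm (m \<omega> - xstar))\<^sup>2 + 2 * \<tau> * \<Gamma>)
         + \<tau>\<^sup>2 * expectation (\<lambda>\<omega>. \<Sum>n\<in>K. w n * (norm (g n \<omega> - grad n (m \<omega>)))\<^sup>2)"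
    using integral_norm_sq_step_cond_exp_le[OF U_F \<open>ghat \<in> borel_measurable M\<close> ghat_L2 _ _ A_le D_le]
    by simp_all
  show "integrable M (\<lambda>\<omega>. (norm (m \<omega> - xstar - \<tau> *\<^sub>R ghat \<omega>))\<^sup>2)"
    by (rule step(1))
  have "expectation (\<lambda>\<omega>. \<Sum>n\<in>K. w n * (norm (g n \<omega> - grad n (m \<omega>)))\<^sup>2) \<le> V"
    by (rule expectation_weighted_sum_le[OF w_nonneg w_sum var_int var_bound])
  then have "\<tau>\<^sup>2 * expectation (\<lambda>\<omega>. \<Sum>n\<in>K. w n * (norm (g n \<omega> - grad n (m \<omega>)))\<^sup>2) \<le> \<tau>\<^sup>2 * V"
    by (rule mult_left_mono) simp
  moreover have "expectation (\<lambda>\<omega>. (1 - \<rho> * \<tau>) * (norm (m \<omega> - xstar))\<^sup>2 + 2 * \<tau> * \<Gamma>)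
      = (1 - \<rho> * \<tau>) * expectation (\<lambda>\<omega>. (norm (m \<omega> - xstar))\<^sup>2) + 2 * \<tau> * \<Gamma>"
    using m_L2 by (simp add: prob_space)
  ultimately show "expectation (\<lambda>\<omega>. (norm (m \<omega> - xstar - \<tau> *\<^sub>R ghat \<omega>))\<^sup>2)
      \<le> (1 - \<rho> * \<tau>) * expectation (\<lambda>\<omega>. (norm (m \<omega> - xstar))\<^sup>2) + 2 * \<tau> * \<Gamma> + \<tau>\<^sup>2 * V"
    using step(2) by linarith
qed

lemma sum_sq_add_div_le_Psi:
  assumes "N \<ge> 1"
  shows "((\<Sum>n\<in>J. (p n)\<^sup>2) + real d * \<sigma>) / (\<Sum>n\<in>K. p n)\<^sup>2 \<le> Psi N d \<sigma> J K p"
proof -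
  have "0 \<le> (\<Sum>n\<in>J. (p n)\<^sup>2)" by (simp add: sum_nonneg)
  then have "(\<Sum>n\<in>J. (p n)\<^sup>2) \<le> real N * (\<Sum>n\<in>J. (p n)\<^sup>2)"
    using assms by (simp add: mult_le_cancel_right1)
  then show ?thesis unfolding Psi_def by (simp add: divide_right_mono)
qed

theorem theorem1:
  fixes M :: "'a measure"
    and N :: nat
    and L :: "nat \<Rightarrow> real^'d \<Rightarrow> real"
    and grad :: "nat \<Rightarrow> real^'d \<Rightarrow> real^'d"
    and mstar :: "real^'d" and mloc :: "nat \<Rightarrow> real^'d"
    and K J :: "nat set"
    and h P :: "nat \<Rightarrow> real"
    and m :: "'a \<Rightarrow> real^'d"
    and g e :: "nat \<Rightarrow> 'a \<Rightarrow> real^'d"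
    and r :: "'a \<Rightarrow> real^'d"
    and G \<sigma>B vth \<theta> \<rho> vrho \<tau> :: real
  assumes prob: "prob_space M"
    \<comment> \<open>local objectives, gradients, minimizers\<close>
    and grad: "\<And>n x. n \<in> {1..N} \<Longrightarrow> GDERIV (L n) x :> grad n x"
    and mstar_min: "\<And>x. (1 / real N) * (\<Sum>n=1..N. L n mstar) \<le> (1 / real N) * (\<Sum>n=1..N. L n x)"
    and mloc_min: "\<And>n x. n \<in> {1..N} \<Longrightarrow> L n (mloc n) \<le> L n x"
    \<comment> \<open>(A2) smoothness and (A3) strong convexity\<close>
    and smooth: "\<And>n x y. n \<in> {1..N} \<Longrightarrow>
        L n y - L n x \<le> (y - x) \<bullet> grad n x + \<theta> / 2 * (norm (y - x))\<^sup>2"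
    and strconv: "\<And>n x y. n \<in> {1..N} \<Longrightarrow>
        L n y - L n x \<ge> (y - x) \<bullet> grad n x + \<rho> / 2 * (norm (y - x))\<^sup>2"
    and \<theta>_pos: "\<theta> > 0" and \<rho>_pos: "\<rho> > 0"
    \<comment> \<open>uploaders and jammers\<close>
    and K_sub: "K \<subseteq> {1..N}" and K_ne: "K \<noteq> {}"
    and J_sub: "J \<subseteq> {1..N} - K"
    and h_pos: "\<And>n. n \<in> {1..N} \<Longrightarrow> h n > 0"
    and P_pos: "\<And>n. n \<in> {1..N} \<Longrightarrow> P n > 0"
    \<comment> \<open>current model (random) and stochastic gradients\<close>
    and m_meas: "m \<in> borel_measurable M"
    and m_L2: "integrable M (\<lambda>\<omega>. (norm (m \<omega> - mstar))\<^sup>2)"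
    and g_meas: "\<And>n. n \<in> K \<Longrightarrow> g n \<in> borel_measurable M"
    and unbiased: "\<And>n i. n \<in> K \<Longrightarrow>
        AE \<omega> in M. real_cond_exp M (vimage_algebra (space M) m borel) (\<lambda>\<omega>. g n \<omega> $ i) \<omega>
                     = grad n (m \<omega>) $ i"
    and var_int: "\<And>n. n \<in> K \<Longrightarrow> integrable M (\<lambda>\<omega>. (norm (g n \<omega> - grad n (m \<omega>)))\<^sup>2)"
    and var_bound: "\<And>n. n \<in> K \<Longrightarrow>
        prob_space.expectation M (\<lambda>\<omega>. (norm (g n \<omega> - grad n (m \<omega>)))\<^sup>2) \<le> vth\<^sup>2"
    and g_exp_bound: "\<And>n. n \<in> K \<Longrightarrow> prob_space.expectation M (\<lambda>\<omega>. norm (g n \<omega>)) \<le> G"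
    and g_bound: "\<And>n \<omega>. n \<in> K \<Longrightarrow> \<omega> \<in> space M \<Longrightarrow> norm (g n \<omega>) \<le> G"
    \<comment> \<open>Gaussian jamming noise and receiver noise\<close>
    and \<sigma>B_pos: "\<sigma>B > 0"
    and e_gauss: "\<And>n i. n \<in> J \<Longrightarrow> distributed M lborel (\<lambda>\<omega>. e n \<omega> $ i) std_normal_density"
    and r_gauss: "\<And>i. distributed M lborel (\<lambda>\<omega>. r \<omega> $ i) (normal_density 0 (sqrt \<sigma>B))"
    and noise_indep: "prob_space.indep_vars M (\<lambda>_. borel) (noise_fam e r)
                        ((Some ` J \<union> {None}) \<times> UNIV)"
    and noise_indep_data: "prob_space.indep_set M
        (sigma_sets (space M) {(\<lambda>\<omega>. \<lambda>k\<in>(Some ` J \<union> {None}) \<times> UNIV. noise_fam e r k \<omega>) -` A \<inter> space M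
           | A. A \<in> sets (PiM ((Some ` J \<union> {None}) \<times> UNIV) (\<lambda>_. borel))})
        (sigma_sets (space M) {(\<lambda>\<omega>. (m \<omega>, \<lambda>n\<in>K. g n \<omega>)) -` A \<inter> space M
           | A. A \<in> sets (borel \<Otimes>\<^sub>M PiM K (\<lambda>_. borel))})"
    \<comment> \<open>step size\<close>
    and vrho_pos: "vrho > 0"
    and \<tau>_lo: "1 / vrho \<le> \<tau>" and \<tau>_hi: "\<tau> \<le> 1 / \<theta>"
  shows
    "let p = (\<lambda>n. h n * sqrt (P n));
         S = (\<Sum>n\<in>K. p n);
         ghat = (\<lambda>\<omega>. \<Sum>n\<in>K. (p n / S) *\<^sub>R g n \<omega>);
         rtot = (\<lambda>\<omega>. (\<Sum>n\<in>J. (p n / sqrt (real CARD('d))) *\<^sub>R e n \<omega>) + r \<omega>);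
         mnext = (\<lambda>\<omega>. m \<omega> - \<tau> *\<^sub>R (ghat \<omega> + (G / S) *\<^sub>R rtot \<omega>))
     in prob_space.expectation M (\<lambda>\<omega>. (norm (mnext \<omega> - mstar))\<^sup>2)
        \<le> (1 - \<rho> * \<tau>) * prob_space.expectation M (\<lambda>\<omega>. (norm (m \<omega> - mstar))\<^sup>2)
          + \<tau>\<^sup>2 * (2 * vrho * Gamma_het N \<theta> mstar mloc + vth\<^sup>2
                   + G\<^sup>2 * Psi N CARD('d) \<sigma>B J K p)"
proof -
  interpret prob_space M by (rule prob)
  define p where "p n = h n * sqrt (P n)" for n
  define S where "S = (\<Sum>n\<in>K. p n)"
  define ghat where "ghat \<omega> = (\<Sum>n\<in>K. (p n / S) *\<^sub>R g n \<omega>)" for \<omega>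
  define rtot where "rtot \<omega> = (\<Sum>n\<in>J. (p n / sqrt (real CARD('d))) *\<^sub>R e n \<omega>) + r \<omega>" for \<omega>
  define X where "X \<omega> = m \<omega> - mstar - \<tau> *\<^sub>R ghat \<omega>" for \<omega>
  define \<Gamma> where "\<Gamma> = Gamma_het N \<theta> mstar mloc"
  have "finite K" "finite J" using K_sub J_sub by (auto intro: finite_subset)
  have K_N: "n \<in> {1..N}" if "n \<in> K" for n using that K_sub by auto
  have p_pos: "p n > 0" if "n \<in> K" for n using K_N[OF that] h_pos P_pos by (simp add: p_def)
  have "S > 0" unfolding S_def using p_pos K_ne \<open>finite K\<close> by (intro sum_pos) auto
  have w_nonneg: "p n / S \<ge> 0" if "n \<in> K" for n using p_pos[OF that] \<open>S > 0\<close> by simp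
  have w_sum: "(\<Sum>n\<in>K. p n / S) = 1" using \<open>S > 0\<close> by (simp add: S_def flip: sum_divide_distrib)
  have "N \<ge> 1" using K_sub K_ne by fastforce
  have "\<tau> > 0" "\<theta> * \<tau> \<le> 1" "1 \<le> \<tau> * vrho"
    using \<tau>_lo \<tau>_hi vrho_pos \<theta>_pos by (auto simp: field_simps intro: less_le_trans[of 0 "1 / vrho"])
  have gap: "L n mstar - L n (mloc n) \<le> \<Gamma>" if "n \<in> K" for n
    using smooth_optimality_gap_le_CARD_mult_Max_abs[OF \<theta>_pos smooth[OF K_N[OF that]] mloc_min[OF K_N[OF that]]]
      Gamma_het_ge[OF K_N[OF that]] unfolding \<Gamma>_def by (rule order_trans)
  note data = stochastic_gradient_step_mean_sq_le[where f=L and grad=grad and \<rho>=\<rho>,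
      OF \<open>finite K\<close> w_nonneg w_sum smooth[OF K_N] strconv[OF K_N] mloc_min[OF K_N] gap \<theta>_pos
      less_imp_le[OF \<open>\<tau> > 0\<close>] \<open>\<theta> * \<tau> \<le> 1\<close> m_meas m_L2 g_meas g_bound unbiased var_int var_bound,
      folded ghat_def X_def]
  have X_eq: "X \<omega> = (\<lambda>z. fst z - mstar - \<tau> *\<^sub>R (\<Sum>n\<in>K. (p n / S) *\<^sub>R snd z n)) (m \<omega>, \<lambda>n\<in>K. g n \<omega>)"
    for \<omega> by (simp add: X_def ghat_def)
  have "(\<lambda>z. fst z - mstar - \<tau> *\<^sub>R (\<Sum>n\<in>K. (p n / S) *\<^sub>R snd z n))
      \<in> borel_measurable (borel \<Otimes>\<^sub>M PiM K (\<lambda>_. borel))"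
    by measurable
  note noise = expectation_norm_sq_diff_gaussian_noise[OF \<open>finite J\<close> \<sigma>B_pos e_gauss r_gauss noise_indep
      noise_indep_data m_meas g_meas this X_eq data(1),
      where a = "\<tau> * G / S" and c = "\<lambda>n. p n / sqrt (real CARD('d))", folded rtot_def]
  have "real CARD('d) * ((\<Sum>n\<in>J. (p n / sqrt (real CARD('d)))\<^sup>2) + \<sigma>B)
      = (\<Sum>n\<in>J. (p n)\<^sup>2) + real CARD('d) * \<sigma>B"
    by (simp add: power_divide distrib_left flip: sum_divide_distrib)
  with noise have "expectation (\<lambda>\<omega>. (norm (X \<omega> - (\<tau> * G / S) *\<^sub>R rtot \<omega>))\<^sup>2)
      = expectation (\<lambda>\<omega>. (norm (X \<omega>))\<^sup>2) + (\<tau> * G / S)\<^sup>2 * ((\<Sum>n\<in>J. (p n)\<^sup>2) + real CARD('d) * \<sigma>B)"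
    by simp
  also have "\<dots> \<le> (1 - \<rho> * \<tau>) * expectation (\<lambda>\<omega>. (norm (m \<omega> - mstar))\<^sup>2)
      + \<tau>\<^sup>2 * (2 * vrho * \<Gamma> + vth\<^sup>2 + G\<^sup>2 * Psi N CARD('d) \<sigma>B J K p)"
  proof -
    have "\<Gamma> \<le> \<tau> * vrho * \<Gamma>"
      using mult_right_mono[OF \<open>1 \<le> \<tau> * vrho\<close> Gamma_het_nonneg[OF \<open>N \<ge> 1\<close>, of \<theta> mstar mloc]] \<theta>_pos
      by (simp add: \<Gamma>_def)
    from mult_left_mono[OF this, of "2 * \<tau>"] \<open>\<tau> > 0\<close>
    have "2 * \<tau> * \<Gamma> \<le> \<tau>\<^sup>2 * (2 * vrho * \<Gamma>)" by (simp add: power2_eq_square mult_ac)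
    moreover have "(\<tau> * G / S)\<^sup>2 * ((\<Sum>n\<in>J. (p n)\<^sup>2) + real CARD('d) * \<sigma>B)
        \<le> \<tau>\<^sup>2 * (G\<^sup>2 * Psi N CARD('d) \<sigma>B J K p)"
      using mult_left_mono[OF sum_sq_add_div_le_Psi[OF \<open>N \<ge> 1\<close>], of "(\<tau> * G)\<^sup>2"]
      by (simp add: S_def power_divide power_mult_distrib mult_ac)
    ultimately show ?thesis using data(2) by (simp add: algebra_simps)
  qed
  finally show ?thesis
    unfolding Let_def p_def[symmetric] S_def[symmetric] ghat_def[symmetric] rtot_def[symmetric]
      \<Gamma>_def[symmetric] by (simp add: X_def algebra_simps)
qed

end
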